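(* Let $f\in\mathbb{R}[x,y]$ be a polynomial of degree $n\ge 3$. Then, for $k=1,2$, the set of singular points at infinity of $\mathbb{Y}_k$ is $\{(u,v,0)\in\mathbb{S}^2: f_n(u,v)=0\}$.
   Context: Write $f=\sum_{i=0}^n f_i$ with $f_i$ homogeneous of degree $i$, $F(u,v,\omega)=\sum_{i=0}^n\omega^{n-i}f_i(u,v)$, $A=-uF_{uu}-vF_{uv}$, $B=-uF_{uv}-vF_{vv}$, $S=u^2F_{uu}+2uvF_{uv}+v^2F_{vv}$, and let $Q=\omega^2F_{uu}du^2+2\omega^2F_{uv}du\,dv+\omega^2F_{vv}dv^2+2\omega A\,du\,d\omega+2\omega B\,dv\,d\omega+S\,d\omega^2$ restricted to the unit sphere $\mathbb{S}^2\subset\mathbb{R}^3=\{(u,v,\omega)\}$ (the analytic extension to the Poincaré sphere of the second fundamental form $f_{xx}dx^2+2f_{xy}dxdy+f_{yy}dy^2$). $\mathbb{Y}_1,\mathbb{Y}_2$ are the two fields of lines on $\mathbb{S}^2$ given by $Q_p(\xi,\xi)=0$, $\xi\in T_p\mathbb{S}^2$. A singular point of $\mathbb{Y}_k$ is a point $p$ where the restriction of $Q_p$ to $T_p\mathbb{S}^2$ vanishes identically; a singular point at infinity is one lying on the equator $\{\omega=0\}$. *)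

theory Defs
  imports "HOL-Analysis.Analysis"
begin

text \<open>A real polynomial f in R[x,y] is represented by its coefficient function c:
  f(x,y) = sum of c i j * x^i * y^j.\<close>

definition poly2_degree :: "(nat \<Rightarrow> nat \<Rightarrow> real) \<Rightarrow> nat \<Rightarrow> bool" where
  "poly2_degree c n \<longleftrightarrow> (\<forall>i j. n < i + j \<longrightarrow> c i j = 0) \<and> (\<exists>i j. i + j = n \<and> c i j \<noteq> 0)"

definition fhom :: "(nat \<Rightarrow> nat \<Rightarrow> real) \<Rightarrow> nat \<Rightarrow> real \<Rightarrow> real \<Rightarrow> real" where
  "fhom c k u v = (\<Sum>i\<le>k. c i (k - i) * u ^ i * v ^ (k - i))"

definition Fext :: "(nat \<Rightarrow> nat \<Rightarrow> real) \<Rightarrow> nat \<Rightarrow> real \<Rightarrow> real \<Rightarrow> real \<Rightarrow> real" where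
  "Fext c n u v w = (\<Sum>k\<le>n. w ^ (n - k) * fhom c k u v)"

definition F_uu where
  "F_uu c n u v w = deriv (\<lambda>s. deriv (\<lambda>t. Fext c n t v w) s) u"
definition F_uv where
  "F_uv c n u v w = deriv (\<lambda>s. deriv (\<lambda>t. Fext c n t s w) u) v"
definition F_vv where
  "F_vv c n u v w = deriv (\<lambda>s. deriv (\<lambda>t. Fext c n u t w) s) v"

definition A_coef where
  "A_coef c n u v w = - u * F_uu c n u v w - v * F_uv c n u v w"
definition B_coef where
  "B_coef c n u v w = - u * F_uv c n u v w - v * F_vv c n u v w"
definition S_coef where
  "S_coef c n u v w = u\<^sup>2 * F_uu c n u v w + 2 * u * v * F_uv c n u v w + v\<^sup>2 * F_vv c n u v w"

text \<open>The quadratic form Q at the point p = (u,v,w), evaluated at xi = (a,b,d) = (du,dv,dw).\<close>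
definition Qform :: "(nat \<Rightarrow> nat \<Rightarrow> real) \<Rightarrow> nat \<Rightarrow> real \<times> real \<times> real \<Rightarrow> real \<times> real \<times> real \<Rightarrow> real" where
  "Qform c n p xi = (case p of (u, v, w) \<Rightarrow> case xi of (a, b, d) \<Rightarrow>
      w\<^sup>2 * F_uu c n u v w * a\<^sup>2 + 2 * w\<^sup>2 * F_uv c n u v w * a * b + w\<^sup>2 * F_vv c n u v w * b\<^sup>2
      + 2 * w * A_coef c n u v w * a * d + 2 * w * B_coef c n u v w * b * d
      + S_coef c n u v w * d\<^sup>2)"

definition sphere2 :: "(real \<times> real \<times> real) set" where
  "sphere2 = {(u, v, w). u\<^sup>2 + v\<^sup>2 + w\<^sup>2 = 1}"

definition tangent_S2 :: "real \<times> real \<times> real \<Rightarrow> real \<times> real \<times> real \<Rightarrow> bool" where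
  "tangent_S2 p xi = (case p of (u, v, w) \<Rightarrow> case xi of (a, b, d) \<Rightarrow> u * a + v * b + w * d = 0)"

text \<open>Singular point of the line fields Y_1, Y_2 (the same for k = 1, 2):
  Q_p restricted to T_p S^2 vanishes identically.\<close>
definition singular_point :: "(nat \<Rightarrow> nat \<Rightarrow> real) \<Rightarrow> nat \<Rightarrow> real \<times> real \<times> real \<Rightarrow> bool" where
  "singular_point c n p \<longleftrightarrow> p \<in> sphere2 \<and> (\<forall>xi. tangent_S2 p xi \<longrightarrow> Qform c n p xi = 0)"

definition singular_point_at_infinity where
  "singular_point_at_infinity c n p \<longleftrightarrow> singular_point c n p \<and> snd (snd p) = 0"

end

theory Submission
  imports Defs
begin

text \<open>On the equator \<open>\<omega> = 0\<close> every term of \<open>Q\<close> except \<open>S d\<omega>\<^sup>2\<close> carries a factor \<open>\<omega>\<close>,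
  and \<open>(0,0,1)\<close> is tangent there, so an equator point is singular iff \<open>S\<close> vanishes.
  Since \<open>F(u,v,0) = f\<^sub>n(u,v)\<close>, Euler's relation for the homogeneous \<open>f\<^sub>n\<close> of degree \<open>n\<close>
  gives \<open>S = n (n - 1) f\<^sub>n\<close>, and \<open>n (n - 1) \<noteq> 0\<close>.\<close>

lemma deriv_monomial_sum:
  fixes a :: "nat \<Rightarrow> real"
  assumes "finite A"
  shows "deriv (\<lambda>t. \<Sum>i\<in>A. a i * t ^ e i) x = (\<Sum>i\<in>A. a i * real (e i) * x ^ (e i - 1))"
  by (rule DERIV_imp_deriv) (rule derivative_eq_intros assms refl | simp add: mult_ac)+

lemma second_deriv_monomial_sum:
  fixes a :: "nat \<Rightarrow> real"
  assumes "finite A"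
  shows "deriv (\<lambda>s. deriv (\<lambda>t. \<Sum>i\<in>A. a i * t ^ e i) s) x
    = (\<Sum>i\<in>A. a i * (real (e i) * real (e i - 1) * x ^ (e i - 2)))"
proof -
  have "(\<lambda>s. deriv (\<lambda>t. \<Sum>i\<in>A. a i * t ^ e i) s)
      = (\<lambda>s. \<Sum>i\<in>A. (a i * real (e i)) * s ^ (e i - 1))"
    using assms by (simp only: deriv_monomial_sum)
  then have "deriv (\<lambda>s. deriv (\<lambda>t. \<Sum>i\<in>A. a i * t ^ e i) s) x
      = (\<Sum>i\<in>A. a i * real (e i) * real (e i - 1) * x ^ (e i - 1 - 1))"
    using assms by (simp only: deriv_monomial_sum)
  then show ?thesis
    by (simp add: mult.assoc numeral_2_eq_2)
qed

lemma mult_deriv_power: "(x::real) * (real e * x ^ (e - 1)) = real e * x ^ e"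
  by (cases e) auto

lemma power2_mult_second_deriv_power:
  "(x::real)\<^sup>2 * (real e * real (e - 1) * x ^ (e - 2)) = real e * (real e - 1) * x ^ e"
  by (cases e; cases "e - 1") (auto simp: power2_eq_square algebra_simps)

lemma Fext_equator: "Fext c n u v 0 = fhom c n u v"
proof -
  have "Fext c n u v 0 = (\<Sum>k\<le>n. if k = n then fhom c n u v else 0)"
    unfolding Fext_def by (rule sum.cong) auto
  then show ?thesis by simp
qed

lemma power2_mult_F_uu_equator:
  "u\<^sup>2 * F_uu c n u v 0 = (\<Sum>i\<le>n. real i * (real i - 1) * (c i (n - i) * v ^ (n - i) * u ^ i))"
proof -
  have "(\<lambda>t. Fext c n t v 0) = (\<lambda>t. \<Sum>i\<le>n. (c i (n - i) * v ^ (n - i)) * t ^ i)"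
    by (simp add: Fext_equator fhom_def mult_ac)
  then have expansion: "F_uu c n u v 0
      = (\<Sum>i\<le>n. (c i (n - i) * v ^ (n - i)) * (real i * real (i - 1) * u ^ (i - 2)))"
    unfolding F_uu_def by (simp only: second_deriv_monomial_sum finite_atMost)
  show ?thesis
    unfolding expansion sum_distrib_left
    by (intro sum.cong refl) (metis power2_mult_second_deriv_power mult.left_commute)
qed

lemma mult_F_uv_equator:
  "u * v * F_uv c n u v 0 = (\<Sum>i\<le>n. real i * real (n - i) * (c i (n - i) * u ^ i * v ^ (n - i)))"
proof -
  have "\<And>s. (\<lambda>t. Fext c n t s 0) = (\<lambda>t. \<Sum>i\<le>n. (c i (n - i) * s ^ (n - i)) * t ^ i)"
    by (simp add: Fext_equator fhom_def mult_ac)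
  then have "\<And>s. deriv (\<lambda>t. Fext c n t s 0) u
      = (\<Sum>i\<le>n. (c i (n - i) * (real i * u ^ (i - 1))) * s ^ (n - i))"
    by (simp only: deriv_monomial_sum finite_atMost) (simp add: mult_ac)
  then have expansion: "F_uv c n u v 0
      = (\<Sum>i\<le>n. c i (n - i) * (real i * u ^ (i - 1)) * (real (n - i) * v ^ (n - i - 1)))"
    unfolding F_uv_def by (simp only: deriv_monomial_sum finite_atMost) (simp add: mult.assoc)
  show ?thesis
    unfolding expansion sum_distrib_left
  proof (intro sum.cong refl)
    fix i
    have "u * v * (c i (n - i) * (real i * u ^ (i - 1)) * (real (n - i) * v ^ (n - i - 1)))
        = c i (n - i) * (u * (real i * u ^ (i - 1))) * (v * (real (n - i) * v ^ (n - i - 1)))"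
      by (simp only: mult_ac)
    then show "u * v * (c i (n - i) * (real i * u ^ (i - 1)) * (real (n - i) * v ^ (n - i - 1)))
        = real i * real (n - i) * (c i (n - i) * u ^ i * v ^ (n - i))"
      by (simp only: mult_deriv_power mult_ac)
  qed
qed

lemma power2_mult_F_vv_equator:
  "v\<^sup>2 * F_vv c n u v 0
    = (\<Sum>i\<le>n. real (n - i) * (real (n - i) - 1) * (c i (n - i) * u ^ i * v ^ (n - i)))"
proof -
  have "(\<lambda>t. Fext c n u t 0) = (\<lambda>t. \<Sum>i\<le>n. (c i (n - i) * u ^ i) * t ^ (n - i))"
    by (simp add: Fext_equator fhom_def)
  then have expansion: "F_vv c n u v 0
      = (\<Sum>i\<le>n. (c i (n - i) * u ^ i) * (real (n - i) * real (n - i - 1) * v ^ (n - i - 2)))"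
    unfolding F_vv_def by (simp only: second_deriv_monomial_sum finite_atMost)
  show ?thesis
    unfolding expansion sum_distrib_left
    by (intro sum.cong refl) (metis power2_mult_second_deriv_power mult.left_commute)
qed

lemma S_coef_equator: "S_coef c n u v 0 = real n * (real n - 1) * fhom c n u v"
proof -
  have "S_coef c n u v 0 = (\<Sum>i\<le>n. (real i * (real i - 1) + 2 * (real i * real (n - i))
      + real (n - i) * (real (n - i) - 1)) * (c i (n - i) * u ^ i * v ^ (n - i)))"
    unfolding S_coef_def mult.assoc[of 2] power2_mult_F_uu_equator mult_F_uv_equator
      power2_mult_F_vv_equator
    by (simp add: sum_distrib_left sum.distrib[symmetric] algebra_simps)
  also have "\<dots> = (\<Sum>i\<le>n. real n * (real n - 1) * (c i (n - i) * u ^ i * v ^ (n - i)))"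
    by (rule sum.cong) (auto simp: of_nat_diff algebra_simps)
  finally show ?thesis
    by (simp add: fhom_def sum_distrib_left mult.assoc)
qed

lemma singular_point_equator_iff:
  "singular_point c n (u, v, 0) \<longleftrightarrow> (u, v, 0) \<in> sphere2 \<and> S_coef c n u v 0 = 0"
proof -
  have "Qform c n (u, v, 0) xi = S_coef c n u v 0 * (snd (snd xi))\<^sup>2" for xi
    by (cases xi) (simp add: Qform_def)
  moreover have "tangent_S2 (u, v, 0) (0, 0, 1)"
    by (simp add: tangent_S2_def)
  ultimately show ?thesis
    unfolding singular_point_def by force
qed

theorem corollary1:
  fixes c :: "nat \<Rightarrow> nat \<Rightarrow> real" and n :: nat
  assumes "poly2_degree c n" and "n \<ge> 3"
  shows "{p. singular_point_at_infinity c n p} = {(u, v, w) \<in> sphere2. w = 0 \<and> fhom c n u v = 0}"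
proof -
  have "real n * (real n - 1) \<noteq> 0"
    using assms(2) by simp
  then have "singular_point c n (u, v, 0) \<longleftrightarrow> (u, v, 0) \<in> sphere2 \<and> fhom c n u v = 0" for u v
    by (simp add: singular_point_equator_iff S_coef_equator)
  then show ?thesis
    unfolding singular_point_at_infinity_def by auto
qed

end
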